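(* Let $f_0,f_1\in \mathrm{PL}_0(\mathbf{I})$ satisfy $[f_1^{f_0},f_0f_1^{-1}]=1$ and $[f_0f_1^{-1},f_1^{f_0^2}]=1$. Let $A=(a,c)$ be an orbital of $f_0$ that is a down-bump, and suppose $(a,c)$ is not an orbital of $f_1$. Let $(b_1,d_1),(b_2,d_2),\dots,(b_n,d_n)$, with $n\ge1$, be all the orbitals of $f_1$ that meet $(a,c)$, in increasing order. Then: (i) $d_n<c$; (ii) there is a point $\rho>a$ such that $f_0|_{[a,\rho]}=f_1|_{[a,\rho]}$; (iii) $b_1=a$; (iv) if $\rho$ is the maximal point such that $f_0|_{[a,\rho]}=f_1|_{[a,\rho]}$, then $d_1f_0\le\rho$; (v) $d_nf_0<d_1$.
   Context: $\mathrm{PL}_0(\mathbf{I})$ is the group of orientation-preserving piecewise-linear homeomorphisms of $[0,1]$ with finitely many points of non-differentiability. Functions act on the right: $tf=f(t)$, $fg=g\circ f$, $a^b=b^{-1}ab$, $[a,b]=aba^{-1}b^{-1}$. The orbitals of $f$ are the connected components (open intervals) of $\operatorname{Supp}(f)=\{x: xf\ne x\}$; an orbital $A$ is a down-bump if $xf<x$ for all $x\in A$. Orbitals are ordered by $A<B$ if every point of $A$ is less than every point of $B$. *)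

theory Defs
  imports "HOL-Analysis.Analysis"
begin

text \<open>Elements of PL_0(I) are modelled as functions real => real that are the
identity outside [0,1] (so that composition and inverse are total and well-behaved).\<close>

definition PL0 :: "(real \<Rightarrow> real) \<Rightarrow> bool" where
  "PL0 f \<longleftrightarrow>
     (\<forall>x. x \<notin> {0..1} \<longrightarrow> f x = x) \<and> f 0 = 0 \<and> f 1 = 1 \<and>
     strict_mono_on {0..1} f \<and> continuous_on {0..1} f \<and>
     (\<exists>P. finite P \<and> {0,1} \<subseteq> P \<and> P \<subseteq> {0..1} \<and>
        (\<forall>u v. u \<in> P \<and> v \<in> P \<and> u < v \<and> {u<..<v} \<inter> P = {} \<longrightarrow>
           (\<exists>m k. \<forall>x\<in>{u..v}. f x = m * x + k)))"

text \<open>Right action: t(fg) = g(f(t)), i.e. fg = g o f.\<close>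
definition pmult :: "(real \<Rightarrow> real) \<Rightarrow> (real \<Rightarrow> real) \<Rightarrow> (real \<Rightarrow> real)" where
  "pmult f g = g \<circ> f"

definition pinv :: "(real \<Rightarrow> real) \<Rightarrow> (real \<Rightarrow> real)" where
  "pinv f = inv f"

definition pconj :: "(real \<Rightarrow> real) \<Rightarrow> (real \<Rightarrow> real) \<Rightarrow> (real \<Rightarrow> real)" where
  "pconj a b = pmult (pmult (pinv b) a) b"

definition pcomm :: "(real \<Rightarrow> real) \<Rightarrow> (real \<Rightarrow> real) \<Rightarrow> (real \<Rightarrow> real)" where
  "pcomm a b = pmult (pmult (pmult a b) (pinv a)) (pinv b)"

definition supp :: "(real \<Rightarrow> real) \<Rightarrow> real set" where
  "supp f = {x. f x \<noteq> x}"

definition orbital :: "(real \<Rightarrow> real) \<Rightarrow> real set \<Rightarrow> bool" where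
  "orbital f A \<longleftrightarrow> A \<in> components (supp f)"

definition down_bump :: "(real \<Rightarrow> real) \<Rightarrow> real set \<Rightarrow> bool" where
  "down_bump f A \<longleftrightarrow> orbital f A \<and> (\<forall>x\<in>A. f x < x)"

end

theory Submission
  imports Defs
begin

text \<open>Write \<open>g = f0 f1\<^sup>-\<^sup>1\<close>, \<open>u = f1\<^sup>f\<^sup>0\<close>, \<open>v = f1\<^sup>f\<^sup>0\<^sup>2\<close>; the hypotheses say that \<open>g\<close>
commutes with \<open>u\<close> and with \<open>v\<close>. For a piecewise-linear \<open>k\<close> with orbital \<open>(p, q)\<close>, iterating
\<open>k\<close> or \<open>k\<^sup>-\<^sup>1\<close> pushes every point of \<open>(p, q)\<close> towards \<open>p\<close>. Hence a map commuting with \<open>k\<close>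
there and fixing \<open>p\<close> is determined by its germ at \<open>p\<close>, and is the identity as soon as it fixes
one point of \<open>(p, q)\<close>; a map commuting with \<open>k\<close> everywhere fixes \<open>p\<close> and \<open>q\<close>.

So \<open>g\<close> fixes the ends of the \<open>u\<close>-orbitals \<open>f0 (b\<^sub>i, d\<^sub>i)\<close> and of the \<open>v\<close>-orbitals
\<open>f0\<^sup>2 (b\<^sub>i, d\<^sub>i)\<close>. If an orbital of \<open>f1\<close> contained a fixed point of \<open>f0\<close>, its \<open>u\<close>- and
\<open>v\<close>-images would be one orbital of \<open>g\<close>, on which \<open>u\<close> and \<open>v\<close> have the same germ and so agree;
then \<open>f0\<close> commutes with \<open>u\<close> and is the identity there. This rules out \<open>b\<^sub>1 < a\<close> and
\<open>c < d\<^sub>n\<close>; the remaining configurations are excluded by exhibiting a fixed point of \<open>g\<close> in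
\<open>(a, c)\<close> that is also fixed by \<open>f1\<close>, impossible as \<open>f0\<close> moves every point of \<open>(a, c)\<close>.
The same mechanism makes \<open>g\<close> the identity on \<open>[a, f0 d\<^sub>1]\<close>, and for (v) one compares the
last orbital \<open>(Q, c)\<close> of \<open>g\<close> with \<open>f0 d\<^sub>n\<close> and \<open>d\<^sub>1\<close>.\<close>

section \<open>Piecewise-affine homeomorphisms of the line\<close>

definition affine_on :: "(real \<Rightarrow> real) \<Rightarrow> real \<Rightarrow> real \<Rightarrow> bool" where
  "affine_on f s t \<longleftrightarrow> (\<exists>m k. \<forall>x\<in>{s..t}. f x = m * x + k)"

definition locally_affine :: "(real \<Rightarrow> real) \<Rightarrow> bool" where
  "locally_affine f \<longleftrightarrow> (\<forall>t. \<exists>e>0. affine_on f (t - e) t \<and> affine_on f t (t + e))"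

text \<open>Elements of \<open>PL0\<close>, with the finite set of breakpoints relaxed to one-sided local
affinity: this class is closed under composition and inversion.\<close>

definition pl_homeo :: "(real \<Rightarrow> real) \<Rightarrow> bool" where
  "pl_homeo f \<longleftrightarrow> strict_mono f \<and> surj f \<and> (\<forall>x. x \<le> 0 \<or> 1 \<le> x \<longrightarrow> f x = x) \<and> locally_affine f"

lemma affine_on_subinterval: "affine_on f s t \<Longrightarrow> s \<le> s' \<Longrightarrow> t' \<le> t \<Longrightarrow> affine_on f s' t'"
  unfolding affine_on_def by force

lemma affine_on_comp:
  assumes "mono f" "affine_on f s t" "affine_on g (f s) (f t)"
  shows "affine_on (g \<circ> f) s t"
proof -
  obtain m k where f: "\<forall>x\<in>{s..t}. f x = m * x + k" using assms(2) unfolding affine_on_def by blast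
  obtain m' k' where g: "\<forall>y\<in>{f s..f t}. g y = m' * y + k'" using assms(3) unfolding affine_on_def by blast
  have "(g \<circ> f) x = (m' * m) * x + (m' * k + k')" if "x \<in> {s..t}" for x
  proof -
    have "f x \<in> {f s..f t}" using that \<open>mono f\<close> by (auto dest: monoD)
    then show ?thesis using f g that by (simp add: algebra_simps)
  qed
  then show ?thesis unfolding affine_on_def by blast
qed

lemma affine_on_slope_pos:
  fixes f :: "real \<Rightarrow> real"
  assumes "strict_mono f" "s < t" "\<forall>x\<in>{s..t}. f x = m * x + k"
  shows "m > 0"
proof -
  have "m * s + k < m * t + k" using assms strict_monoD[of f s t] by auto
  then have "0 < m * (t - s)" by (simp add: algebra_simps)
  then show ?thesis using \<open>s < t\<close> by (simp add: zero_less_mult_iff)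
qed

lemma affine_on_inv:
  assumes "strict_mono f" "surj f" "affine_on f s t" "s < t"
  shows "affine_on (inv f) (f s) (f t)"
proof -
  obtain m k where f: "\<forall>x\<in>{s..t}. f x = m * x + k" using assms(3) unfolding affine_on_def by blast
  have "m > 0" using affine_on_slope_pos[OF assms(1,4) f] .
  have "inv f y = (1 / m) * y + (- k / m)" if "y \<in> {f s..f t}" for y
  proof -
    have "f (inv f y) = y" using \<open>surj f\<close> by (simp add: surj_f_inv_f)
    then have "inv f y \<in> {s..t}" using that strict_mono_less_eq[OF \<open>strict_mono f\<close>] by (metis atLeastAtMost_iff)
    then have "y = m * inv f y + k" using f \<open>f (inv f y) = y\<close> by auto
    then show ?thesis using \<open>m > 0\<close> by (simp add: field_simps)
  qed
  then show ?thesis unfolding affine_on_def by blast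
qed

lemma affine_on_continuous_on:
  assumes "affine_on f s t" shows "continuous_on {s..t} f"
proof -
  obtain m k where "\<forall>x\<in>{s..t}. f x = m * x + k" using assms unfolding affine_on_def by blast
  moreover have "continuous_on {s..t} (\<lambda>x. m * x + k)" by (intro continuous_intros)
  ultimately show ?thesis using continuous_on_eq[of "{s..t}" "\<lambda>x. m * x + k" f] by simp
qed

lemma affine_on_fixes_all:
  assumes "affine_on f s t" "y \<in> {s..t}" "z \<in> {s..t}" "y < z" "f y = y" "f z = z"
  shows "\<forall>x\<in>{s..t}. f x = x"
proof -
  obtain m k where f: "\<forall>x\<in>{s..t}. f x = m * x + k" using assms(1) unfolding affine_on_def by blast
  have "m * y + k = y" "m * z + k = z" using f assms by auto
  then have "m * (z - y) = 1 * (z - y)" by (simp add: algebra_simps)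
  then have "m = 1" using \<open>y < z\<close> by simp
  then show ?thesis using f \<open>m * y + k = y\<close> by simp
qed

context
  fixes f :: "real \<Rightarrow> real"
  assumes f: "pl_homeo f"
begin

lemma pl_homeo_bij: "bij f"
  using f unfolding pl_homeo_def bij_def by (simp add: strict_mono_imp_inj_on)

lemma pl_homeo_inv_f [simp]: "inv f (f x) = x"
  using pl_homeo_bij by (simp add: bij_is_inj)

lemma pl_homeo_f_inv [simp]: "f (inv f x) = x"
  using pl_homeo_bij by (simp add: bij_is_surj surj_f_inv_f)

lemma pl_homeo_less_iff [simp]: "f x < f y \<longleftrightarrow> x < y"
  using f unfolding pl_homeo_def by (simp add: strict_mono_less)

lemma pl_homeo_le_iff [simp]: "f x \<le> f y \<longleftrightarrow> x \<le> y"
  using f unfolding pl_homeo_def by (simp add: strict_mono_less_eq)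

lemma pl_homeo_eq_iff [simp]: "f x = f y \<longleftrightarrow> x = y"
  by (metis pl_homeo_inv_f)

lemma pl_homeo_outside: "x \<le> 0 \<or> 1 \<le> x \<Longrightarrow> f x = x"
  using f unfolding pl_homeo_def by blast

lemma pl_homeo_affine_near: "\<exists>e>0. affine_on f (t - e) t \<and> affine_on f t (t + e)"
  using f unfolding pl_homeo_def locally_affine_def by blast

lemma pl_homeo_isCont: "isCont f t"
proof -
  obtain e where e: "e > 0" "affine_on f (t - e) t" "affine_on f t (t + e)"
    using pl_homeo_affine_near by blast
  have "continuous_on ({t - e..t} \<union> {t..t + e}) f"
    using e by (intro continuous_on_closed_Un affine_on_continuous_on) auto
  moreover have "{t - e..t} \<union> {t..t + e} = {t - e..t + e}" using e by auto
  moreover have "t \<in> interior {t - e..t + e}" using e by auto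
  ultimately show ?thesis using continuous_on_interior by metis
qed

lemma pl_homeo_continuous_on: "continuous_on S f"
  by (simp add: continuous_at_imp_continuous_on pl_homeo_isCont)

lemma pl_homeo_inv_fixed_iff: "inv f x = x \<longleftrightarrow> f x = x"
  by (metis pl_homeo_f_inv pl_homeo_inv_f)

end

lemma affine_on_id: "affine_on id s t"
  unfolding affine_on_def by (rule exI[of _ 1], rule exI[of _ 0]) simp

lemma pl_homeo_id: "pl_homeo id"
  unfolding pl_homeo_def locally_affine_def using affine_on_id
  by (auto simp: strict_mono_def intro: exI[of _ 1])

lemma pl_homeo_comp:
  assumes f: "pl_homeo f" and g: "pl_homeo g" shows "pl_homeo (g \<circ> f)"
proof -
  have "strict_mono f" "strict_mono g" using f g unfolding pl_homeo_def by auto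
  have "\<exists>e>0. affine_on (g \<circ> f) (t - e) t \<and> affine_on (g \<circ> f) t (t + e)" for t
  proof -
    obtain e1 where e1: "e1 > 0" "affine_on f (t - e1) t" "affine_on f t (t + e1)"
      using pl_homeo_affine_near[OF f] by blast
    obtain e2 where e2: "e2 > 0" "affine_on g (f t - e2) (f t)" "affine_on g (f t) (f t + e2)"
      using pl_homeo_affine_near[OF g] by blast
    obtain \<delta> where \<delta>: "\<delta> > 0" "\<forall>x. dist x t < \<delta> \<longrightarrow> dist (f x) (f t) < e2"
      using pl_homeo_isCont[OF f] e2(1) unfolding continuous_at_eps_delta by blast
    define e where "e = min e1 (\<delta> / 2)"
    have e: "e > 0" "e \<le> e1" "dist (t - e) t < \<delta>" "dist (t + e) t < \<delta>"
      using e1(1) \<delta>(1) by (auto simp: e_def dist_real_def)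
    then have "f t - e2 \<le> f (t - e)" "f (t + e) \<le> f t + e2"
      using \<delta>(2) unfolding dist_real_def by (fastforce simp: abs_less_iff)+
    then have "affine_on g (f (t - e)) (f t)" "affine_on g (f t) (f (t + e))"
      using e2 by (auto intro: affine_on_subinterval)
    moreover have "affine_on f (t - e) t" "affine_on f t (t + e)"
      using e e1 by (auto intro: affine_on_subinterval)
    ultimately show ?thesis
      using e(1) affine_on_comp[OF strict_mono_mono[OF \<open>strict_mono f\<close>]] by blast
  qed
  moreover have "strict_mono (g \<circ> f)"
    using \<open>strict_mono f\<close> \<open>strict_mono g\<close> by (simp add: strict_mono_def)
  moreover have "surj (g \<circ> f)" using f g comp_surj unfolding pl_homeo_def by blast
  moreover have "\<forall>x. x \<le> 0 \<or> 1 \<le> x \<longrightarrow> (g \<circ> f) x = x"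
    using pl_homeo_outside[OF f] pl_homeo_outside[OF g] by simp
  ultimately show ?thesis unfolding pl_homeo_def locally_affine_def by blast
qed

lemma pl_homeo_inv:
  assumes f: "pl_homeo f" shows "pl_homeo (inv f)"
proof -
  have "strict_mono f" "surj f" using f unfolding pl_homeo_def by auto
  have "\<exists>e>0. affine_on (inv f) (s - e) s \<and> affine_on (inv f) s (s + e)" for s
  proof -
    define t where "t = inv f s"
    obtain e where e: "e > 0" "affine_on f (t - e) t" "affine_on f t (t + e)"
      using pl_homeo_affine_near[OF f] by blast
    have "affine_on (inv f) (f (t - e)) (f t)" "affine_on (inv f) (f t) (f (t + e))"
      using affine_on_inv[OF \<open>strict_mono f\<close> \<open>surj f\<close>] e by auto
    moreover have "f t = s" using f by (simp add: t_def)
    moreover have "f (t - e) < f t" "f t < f (t + e)" using e(1) f by simp_all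
    ultimately show ?thesis
      by (intro exI[of _ "min (s - f (t - e)) (f (t + e) - s)"]) (auto intro: affine_on_subinterval)
  qed
  moreover have "strict_mono (inv f)"
  proof (rule strict_monoI)
    fix x y :: real assume "x < y"
    then show "inv f x < inv f y" using pl_homeo_less_iff[OF f, of "inv f x" "inv f y"] f by simp
  qed
  moreover have "surj (inv f)" using pl_homeo_inv_f[OF f] by (metis surjI)
  ultimately show ?thesis
    using pl_homeo_outside[OF f] pl_homeo_inv_fixed_iff[OF f] unfolding pl_homeo_def locally_affine_def by blast
qed

lemma pl_homeo_funpow: "pl_homeo f \<Longrightarrow> pl_homeo (f ^^ m)"
  by (induction m) (simp_all add: pl_homeo_id pl_homeo_comp)

lemma finite_gap_right:
  fixes P :: "real set"
  assumes "finite P" "p \<in> P" "p \<le> t" "q \<in> P" "t < q"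
  obtains u v where "u \<in> P" "v \<in> P" "u \<le> t" "t < v" "{u<..<v} \<inter> P = {}"
proof
  let ?L = "{x\<in>P. x \<le> t}" and ?R = "{x\<in>P. t < x}"
  have L: "finite ?L" "?L \<noteq> {}" and R: "finite ?R" "?R \<noteq> {}" using assms by auto
  show "Max ?L \<in> P" "Max ?L \<le> t" using Max_in[OF L] by auto
  show "Min ?R \<in> P" "t < Min ?R" using Min_in[OF R] by auto
  show "{Max ?L<..<Min ?R} \<inter> P = {}"
    using Max_ge[OF L(1)] Min_le[OF R(1)] by (fastforce simp: not_le)
qed

lemma finite_gap_left:
  fixes P :: "real set"
  assumes "finite P" "p \<in> P" "p < t" "q \<in> P" "t \<le> q"
  obtains u v where "u \<in> P" "v \<in> P" "u < t" "t \<le> v" "{u<..<v} \<inter> P = {}"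
proof
  let ?L = "{x\<in>P. x < t}" and ?R = "{x\<in>P. t \<le> x}"
  have L: "finite ?L" "?L \<noteq> {}" and R: "finite ?R" "?R \<noteq> {}" using assms by auto
  show "Max ?L \<in> P" "Max ?L < t" using Max_in[OF L] by auto
  show "Min ?R \<in> P" "t \<le> Min ?R" using Min_in[OF R] by auto
  show "{Max ?L<..<Min ?R} \<inter> P = {}"
    using Max_ge[OF L(1)] Min_le[OF R(1)] by (fastforce simp: not_le)
qed

context
  fixes f :: "real \<Rightarrow> real"
  assumes f: "PL0 f"
begin

lemma PL0_outside: "x \<le> 0 \<or> 1 \<le> x \<Longrightarrow> f x = x"
proof -
  have "\<forall>x. x \<notin> {0..1} \<longrightarrow> f x = x" "f 0 = 0" "f 1 = 1" using f unfolding PL0_def by auto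
  then show "x \<le> 0 \<or> 1 \<le> x \<Longrightarrow> f x = x" by (cases "x \<in> {0..1}") auto
qed

lemma PL0_maps_unit_interval: "x \<in> {0..1} \<Longrightarrow> f x \<in> {0..1}"
proof -
  assume x: "x \<in> {0..1}"
  have "strict_mono_on {0..1} f" "f 0 = 0" "f 1 = 1" using f unfolding PL0_def by auto
  then show ?thesis
    using x strict_mono_on_leD[of "{0..1}" f 0 x] strict_mono_on_leD[of "{0..1}" f x 1] by auto
qed

lemma PL0_affine_outside: "t \<le> 0 \<or> 1 \<le> s \<Longrightarrow> affine_on f s t"
  unfolding affine_on_def using PL0_outside by (intro exI[of _ 1] exI[of _ 0]) auto

lemma PL0_breakpoints:
  obtains P where "finite P" "{0, 1} \<subseteq> P"
    "\<And>u v. u \<in> P \<Longrightarrow> v \<in> P \<Longrightarrow> u < v \<Longrightarrow> {u<..<v} \<inter> P = {} \<Longrightarrow> affine_on f u v"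
proof -
  obtain P where "finite P" "{0, 1} \<subseteq> P" and gap:
    "\<forall>u v. u \<in> P \<and> v \<in> P \<and> u < v \<and> {u<..<v} \<inter> P = {} \<longrightarrow> (\<exists>m k. \<forall>x\<in>{u..v}. f x = m * x + k)"
    using f unfolding PL0_def by blast
  show ?thesis by (rule that[OF \<open>finite P\<close> \<open>{0, 1} \<subseteq> P\<close>]) (use gap in \<open>auto simp: affine_on_def\<close>)
qed

lemma PL0_affine_left: "\<exists>e>0. affine_on f (t - e) t"
proof -
  obtain P where P: "finite P" "{0, 1} \<subseteq> P"
    "\<And>u v. u \<in> P \<Longrightarrow> v \<in> P \<Longrightarrow> u < v \<Longrightarrow> {u<..<v} \<inter> P = {} \<Longrightarrow> affine_on f u v"
    using PL0_breakpoints by blast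
  consider "t \<le> 0" | "1 < t" | "0 < t" "t \<le> 1" by linarith
  then show ?thesis
  proof cases
    case 1
    then show ?thesis using PL0_affine_outside[of t "t - 1"] by (intro exI[of _ 1]) simp
  next
    case 2
    then show ?thesis using PL0_affine_outside[of t "t - (t - 1)"] by (intro exI[of _ "t - 1"]) simp
  next
    case 3
    then obtain u v where "u \<in> P" "v \<in> P" "u < t" "t \<le> v" "{u<..<v} \<inter> P = {}"
      using finite_gap_left[OF P(1), of 0 t 1] P(2) by blast
    then have "affine_on f u v" using P(3) by simp
    then have "affine_on f (t - (t - u)) t" using \<open>t \<le> v\<close> by (auto intro: affine_on_subinterval)
    then show ?thesis using \<open>u < t\<close> by (intro exI[of _ "t - u"]) simp
  qed
qed

lemma PL0_affine_right: "\<exists>e>0. affine_on f t (t + e)"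
proof -
  obtain P where P: "finite P" "{0, 1} \<subseteq> P"
    "\<And>u v. u \<in> P \<Longrightarrow> v \<in> P \<Longrightarrow> u < v \<Longrightarrow> {u<..<v} \<inter> P = {} \<Longrightarrow> affine_on f u v"
    using PL0_breakpoints by blast
  consider "1 \<le> t" | "t < 0" | "0 \<le> t" "t < 1" by linarith
  then show ?thesis
  proof cases
    case 1
    then show ?thesis using PL0_affine_outside[of "t + 1" t] by (intro exI[of _ 1]) simp
  next
    case 2
    then show ?thesis using PL0_affine_outside[of "t + - t" t] by (intro exI[of _ "- t"]) simp
  next
    case 3
    then obtain u v where "u \<in> P" "v \<in> P" "u \<le> t" "t < v" "{u<..<v} \<inter> P = {}"
      using finite_gap_right[OF P(1), of 0 t 1] P(2) by blast
    then have "affine_on f u v" using P(3) by simp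
    then have "affine_on f t (t + (v - t))" using \<open>u \<le> t\<close> by (auto intro: affine_on_subinterval)
    then show ?thesis using \<open>t < v\<close> by (intro exI[of _ "v - t"]) simp
  qed
qed

lemma PL0_imp_pl_homeo: "pl_homeo f"
proof -
  have mono01: "strict_mono_on {0..1} f" and cont: "continuous_on {0..1} f" and "f 0 = 0" "f 1 = 1"
    using f unfolding PL0_def by auto
  have "strict_mono f"
  proof (rule strict_monoI)
    fix x y :: real assume "x < y"
    show "f x < f y"
    proof (cases "x \<in> {0..1} \<and> y \<in> {0..1}")
      case True then show ?thesis using mono01 \<open>x < y\<close> by (simp add: strict_mono_onD)
    next
      case False
      then have "x < 0 \<or> 1 < y" using \<open>x < y\<close> by auto
      then show ?thesis using \<open>x < y\<close> PL0_outside PL0_maps_unit_interval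
        by (smt (verit) atLeastAtMost_iff)
    qed
  qed
  moreover have "surj f"
  proof -
    have "y \<in> range f" for y
    proof (cases "y \<in> {0..1}")
      case True
      then obtain x where "f x = y" using IVT'[of f 0 y 1] cont \<open>f 0 = 0\<close> \<open>f 1 = 1\<close> by auto
      then show ?thesis by blast
    next
      case False
      then have "f y = y" using PL0_outside by auto
      then show ?thesis by (metis rangeI)
    qed
    then show ?thesis by blast
  qed
  moreover have "locally_affine f" unfolding locally_affine_def
  proof
    fix t
    obtain e1 e2 where "e1 > 0" "affine_on f (t - e1) t" "e2 > 0" "affine_on f t (t + e2)"
      using PL0_affine_left PL0_affine_right by blast
    then show "\<exists>e>0. affine_on f (t - e) t \<and> affine_on f t (t + e)"
      by (intro exI[of _ "min e1 e2"]) (auto intro: affine_on_subinterval)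
  qed
  ultimately show ?thesis using PL0_outside unfolding pl_homeo_def by blast
qed

end

section \<open>Bumps and maps commuting with them\<close>

definition bump :: "(real \<Rightarrow> real) \<Rightarrow> real \<Rightarrow> real \<Rightarrow> bool" where
  "bump k p q \<longleftrightarrow> p < q \<and> k p = p \<and> k q = q \<and> (\<forall>x\<in>{p<..<q}. k x \<noteq> x)"

definition commute_on :: "real set \<Rightarrow> (real \<Rightarrow> real) \<Rightarrow> (real \<Rightarrow> real) \<Rightarrow> bool" where
  "commute_on S h k \<longleftrightarrow> (\<forall>x\<in>S. h (k x) = k (h x))"

lemma commute_on_sym: "commute_on S h k \<longleftrightarrow> commute_on S k h"
  unfolding commute_on_def by auto

lemma commute_on_subset: "commute_on S h k \<Longrightarrow> T \<subseteq> S \<Longrightarrow> commute_on T h k"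
  unfolding commute_on_def by blast

lemma commute_on_inv:
  assumes "pl_homeo k" "k ` S = S" "commute_on S h k"
  shows "commute_on S h (inv k)"
  unfolding commute_on_def
proof
  fix x assume "x \<in> S"
  then have "inv k x \<in> S" using assms(1,2) by (metis imageE pl_homeo_inv_f)
  then have "h (k (inv k x)) = k (h (inv k x))" using assms(3) unfolding commute_on_def by blast
  then show "h (inv k x) = inv k (h x)" using assms(1) by (metis pl_homeo_f_inv pl_homeo_inv_f)
qed

lemma commute_on_funpow:
  assumes "commute_on S h k" "k ` S \<subseteq> S" "x \<in> S"
  shows "h ((k ^^ m) x) = (k ^^ m) (h x)"
proof (induction m)
  case (Suc m)
  have "(k ^^ m) x \<in> S" using assms(2,3) by (induction m) auto
  then show ?case using Suc assms(1) unfolding commute_on_def by simp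
qed simp

lemma pl_homeo_image_interval:
  assumes "pl_homeo k" shows "k ` {p<..<q} = {k p<..<k q}"
proof
  show "{k p<..<k q} \<subseteq> k ` {p<..<q}"
  proof
    fix y assume "y \<in> {k p<..<k q}"
    then have "k (inv k y) \<in> {k p<..<k q}" using assms by simp
    then have "inv k y \<in> {p<..<q}" by (simp only: greaterThanLessThan_iff pl_homeo_less_iff[OF assms])
    then show "y \<in> k ` {p<..<q}" using assms by (metis image_eqI pl_homeo_f_inv)
  qed
qed (use assms in auto)

lemma bump_image_eq: "pl_homeo k \<Longrightarrow> bump k p q \<Longrightarrow> k ` {p<..<q} = {p<..<q}"
  by (simp add: pl_homeo_image_interval bump_def)

lemma bump_if_component:
  assumes B: "{p<..<q} \<in> components (supp f)"
  shows "bump f p q"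
proof -
  have "p < q" using in_components_nonempty[OF B] by simp
  have sub: "{p<..<q} \<subseteq> supp f" using in_components_subset[OF B] .
  have max: "D = {p<..<q}" if "{p<..<q} \<subseteq> D" "D \<subseteq> supp f" "connected D" for D
    using B that in_components_maximal by blast
  have "f p = p"
  proof (rule ccontr)
    assume "f p \<noteq> p"
    moreover have "{p..<q} = insert p {p<..<q}" using \<open>p < q\<close> by auto
    ultimately have "{p..<q} \<subseteq> supp f" using sub by (auto simp: supp_def)
    then have "{p..<q} = {p<..<q}" by (intro max) auto
    then show False using \<open>p < q\<close> by (metis atLeastLessThan_iff greaterThanLessThan_iff order_refl less_irrefl)
  qed
  moreover have "f q = q"
  proof (rule ccontr)
    assume "f q \<noteq> q"
    moreover have "{p<..q} = insert q {p<..<q}" using \<open>p < q\<close> by auto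
    ultimately have "{p<..q} \<subseteq> supp f" using sub by (auto simp: supp_def)
    then have "{p<..q} = {p<..<q}" by (intro max) auto
    then show False using \<open>p < q\<close> by (metis greaterThanAtMost_iff greaterThanLessThan_iff order_refl less_irrefl)
  qed
  ultimately show ?thesis unfolding bump_def using \<open>p < q\<close> sub by (auto simp: supp_def)
qed

lemma bump_overlap_eq:
  assumes "bump k p q" "bump k p' q'" "e \<in> {p<..<q}" "e \<in> {p'<..<q'}"
  shows "p = p' \<and> q = q'"
proof -
  have "\<not> p < p'" "\<not> p' < p" "\<not> q < q'" "\<not> q' < q"
    using assms unfolding bump_def by (meson greaterThanLessThan_iff order.strict_trans)+
  then show ?thesis by linarith
qed

lemma bump_conj:
  assumes "pl_homeo h" "bump k p q"
  shows "bump (h \<circ> k \<circ> inv h) (h p) (h q)"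
proof -
  have "(h \<circ> k \<circ> inv h) y \<noteq> y" if "y \<in> {h p<..<h q}" for y
  proof -
    have "h (inv h y) \<in> {h p<..<h q}" using that assms(1) by simp
    then have "inv h y \<in> {p<..<q}" by (simp only: greaterThanLessThan_iff pl_homeo_less_iff[OF assms(1)])
    then have "k (inv h y) \<noteq> inv h y" using assms(2) unfolding bump_def by blast
    then show ?thesis using pl_homeo_inv_f[OF assms(1), of "k (inv h y)"] by auto
  qed
  then show ?thesis using assms unfolding bump_def by simp
qed

lemma bump_commuting_image:
  assumes "pl_homeo g" "commute_on UNIV g k" "bump k p q"
  shows "bump k (g p) (g q)"
proof -
  have "(g \<circ> k \<circ> inv g) x = k x" for x
    using assms(2) pl_homeo_f_inv[OF assms(1)] unfolding commute_on_def by simp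
  then have "g \<circ> k \<circ> inv g = k" by blast
  then show ?thesis using bump_conj[OF assms(1,3)] by simp
qed

lemma bump_inv: "pl_homeo k \<Longrightarrow> bump k p q \<Longrightarrow> bump (inv k) p q"
  unfolding bump_def by (simp add: pl_homeo_inv_fixed_iff)

lemma bump_funpow_tendsto_left:
  assumes k: "pl_homeo k" and "bump k p q" "x \<in> {p<..<q}" "k x < x"
  shows "(\<lambda>m. (k ^^ m) x) \<longlonglongrightarrow> p"
proof -
  define s where "s m = (k ^^ m) x" for m
  have mem: "s m \<in> {p<..<q}" for m
    using bump_image_eq[OF k \<open>bump k p q\<close>] \<open>x \<in> {p<..<q}\<close> by (induction m) (auto simp: s_def)
  have "s (Suc m) < s m" for m
    using \<open>k x < x\<close> by (induction m) (auto simp: s_def pl_homeo_less_iff[OF k])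
  then have "decseq s" by (simp add: decseq_SucI less_imp_le)
  moreover have "\<forall>m. p \<le> s m" using mem by (simp add: less_imp_le)
  ultimately obtain L where L: "s \<longlonglongrightarrow> L" "\<forall>m. L \<le> s m"
    using decseq_convergent[of s p] by blast
  have "(\<lambda>m. k (s m)) \<longlonglongrightarrow> k L"
    using L(1) pl_homeo_isCont[OF k] by (rule isCont_tendsto_compose[rotated])
  then have "(\<lambda>m. s (Suc m)) \<longlonglongrightarrow> k L" by (simp add: s_def)
  then have "k L = L" using LIMSEQ_unique LIMSEQ_Suc[OF L(1)] by blast
  moreover have "p \<le> L" using LIMSEQ_le_const[OF L(1)] \<open>\<forall>m. p \<le> s m\<close> by blast
  moreover have "L \<le> x" using L(2)[rule_format, of 0] by (simp add: s_def)
  ultimately have "L = p" using assms(2,3) unfolding bump_def by force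
  then show ?thesis using L(1) by (simp add: s_def[abs_def])
qed

lemma bump_approach_left_end:
  assumes "pl_homeo k" "bump k p q" "x \<in> {p<..<q}"
  obtains K where "K = k \<or> K = inv k" "(\<lambda>m. (K ^^ m) x) \<longlonglongrightarrow> p"
proof (cases "k x < x")
  case True
  then show ?thesis using that bump_funpow_tendsto_left[OF assms] by blast
next
  case False
  moreover have "k x \<noteq> x" using assms(2,3) unfolding bump_def by blast
  ultimately have "x < k x" by simp
  then have "inv k x < inv k (k x)" using pl_homeo_inv[OF assms(1)] by simp
  then have "inv k x < x" using assms(1) by simp
  then show ?thesis
    using that bump_funpow_tendsto_left[OF pl_homeo_inv bump_inv] assms by blast
qed

lemma bump_commuting_agree:
  assumes k: "pl_homeo k" "bump k p q"
    and "commute_on {p<..<q} h1 k" "commute_on {p<..<q} h2 k"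
    and "e > 0" "\<forall>x\<in>{p<..<p + e}. h1 x = h2 x"
  shows "\<forall>x\<in>{p<..<q}. h1 x = h2 x"
proof
  fix x assume x: "x \<in> {p<..<q}"
  obtain K where K: "K = k \<or> K = inv k" "(\<lambda>m. (K ^^ m) x) \<longlonglongrightarrow> p"
    using bump_approach_left_end[OF k x] by blast
  have "pl_homeo K" using K(1) k(1) pl_homeo_inv by blast
  have KS: "K ` {p<..<q} = {p<..<q}" using K(1) k bump_image_eq bump_inv pl_homeo_inv by blast
  have "commute_on {p<..<q} h1 K" "commute_on {p<..<q} h2 K"
    using K(1) assms(3,4) commute_on_inv[OF k(1) bump_image_eq[OF k]] by blast+
  then have comm: "h1 ((K ^^ m) x) = (K ^^ m) (h1 x)" "h2 ((K ^^ m) x) = (K ^^ m) (h2 x)" for m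
    using commute_on_funpow KS x by (metis order_refl)+
  obtain m where "(K ^^ m) x < p + e"
    using order_tendstoD(2)[OF K(2), of "p + e"] \<open>e > 0\<close> by (auto simp: eventually_sequentially)
  moreover have "(K ^^ m) x \<in> {p<..<q}" using KS x by (induction m) auto
  ultimately have "h1 ((K ^^ m) x) = h2 ((K ^^ m) x)" using assms(6) by simp
  then have "(K ^^ m) (h1 x) = (K ^^ m) (h2 x)" using comm by simp
  then show "h1 x = h2 x" using pl_homeo_funpow[OF \<open>pl_homeo K\<close>] pl_homeo_eq_iff by blast
qed

text \<open>The fixed points \<open>K\<^sup>m y\<close> of \<open>h\<close> accumulate at \<open>p\<close>, where \<open>h\<close> is affine.\<close>

lemma bump_commuting_id_if_fixed_point:
  assumes k: "pl_homeo k" "bump k p q" and h: "pl_homeo h" "h p = p"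
    and "commute_on {p<..<q} h k" "y \<in> {p<..<q}" "h y = y"
  shows "\<forall>x\<in>{p<..<q}. h x = x"
proof -
  obtain e where e: "e > 0" "affine_on h p (p + e)" using pl_homeo_affine_near[OF h(1)] by blast
  obtain K where K: "K = k \<or> K = inv k" "(\<lambda>m. (K ^^ m) y) \<longlonglongrightarrow> p"
    using bump_approach_left_end[OF k \<open>y \<in> {p<..<q}\<close>] by blast
  have KS: "K ` {p<..<q} = {p<..<q}" using K(1) k bump_image_eq bump_inv pl_homeo_inv by blast
  have "commute_on {p<..<q} h K"
    using K(1) assms(5) commute_on_inv[OF k(1) bump_image_eq[OF k]] by blast
  then have fixed: "h ((K ^^ m) y) = (K ^^ m) y" for m
    using commute_on_funpow KS assms(6,7) by (metis order_refl)
  obtain m where "(K ^^ m) y < p + e"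
    using order_tendstoD(2)[OF K(2), of "p + e"] \<open>e > 0\<close> by (auto simp: eventually_sequentially)
  moreover have "(K ^^ m) y \<in> {p<..<q}" using KS assms(6) by (induction m) auto
  ultimately have "\<forall>x\<in>{p..p + e}. h x = x"
    using affine_on_fixes_all[OF e(2), of p "(K ^^ m) y"] fixed h(2) e(1) by simp
  moreover have "commute_on {p<..<q} id k" by (simp add: commute_on_def)
  ultimately show ?thesis using bump_commuting_agree[OF k assms(5) _ e(1), of id] by simp
qed

lemma bumps_not_accumulating:
  assumes k: "pl_homeo k" and bumps: "\<And>m. bump k (s m) (t m)"
    and "\<And>m. t m \<le> s (Suc m)" "\<And>m. s m \<le> B"
  shows False
proof -
  have less_Suc: "s m < s (Suc m)" for m using bumps[of m] assms(3)[of m] unfolding bump_def by linarith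
  then have "incseq s" by (simp add: incseq_SucI less_imp_le)
  then obtain L where L: "s \<longlonglongrightarrow> L" "\<forall>m. s m \<le> L" using incseq_convergent[of s B] assms(4) by blast
  have "(\<lambda>m. k (s m)) \<longlonglongrightarrow> k L" using L(1) pl_homeo_isCont[OF k] by (rule isCont_tendsto_compose[rotated])
  moreover have "k (s m) = s m" for m using bumps unfolding bump_def by blast
  ultimately have "k L = L" using L(1) LIMSEQ_unique by auto
  obtain e where e: "e > 0" "affine_on k (L - e) L" using pl_homeo_affine_near[OF k] by blast
  obtain m where "L - e < s m"
    using order_tendstoD(1)[OF L(1), of "L - e"] e(1) by (auto simp: eventually_sequentially)
  moreover have "s m < L" using less_Suc L(2) by (meson less_le_trans)
  ultimately have fixed: "\<forall>x\<in>{L - e..L}. k x = x"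
    using affine_on_fixes_all[OF e(2), of "s m" L] bumps \<open>k L = L\<close> unfolding bump_def by simp
  define x where "x = (s m + t m) / 2"
  have "x \<in> {s m<..<t m}" using bumps[of m] unfolding bump_def x_def by simp
  moreover have "t m \<le> L" using assms(3) L(2) by (meson order_trans)
  ultimately show False using fixed bumps[of m] \<open>L - e < s m\<close> unfolding bump_def by force
qed

text \<open>Otherwise the images \<open>g\<^sup>m (p, q)\<close> would be bumps of \<open>k\<close> accumulating at some point.\<close>

lemma bump_commuting_not_right:
  assumes g: "pl_homeo g" and k: "pl_homeo k" and comm: "commute_on UNIV g k" and "bump k p q"
  shows "\<not> p < g p"
proof
  assume "p < g p"
  then have "p < 1" using pl_homeo_outside[OF g, of p] by force
  have "bump k (g p) (g q)" using bump_commuting_image[OF g comm \<open>bump k p q\<close>] .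
  then have "q \<le> g p" using \<open>p < g p\<close> \<open>bump k p q\<close> unfolding bump_def by force
  define s where "s m = (g ^^ m) p" for m
  define t where "t m = (g ^^ m) q" for m
  have "bump k (s m) (t m)" for m
    using \<open>bump k p q\<close> bump_commuting_image[OF g comm] by (induction m) (auto simp: s_def t_def)
  moreover have "t m \<le> s (Suc m)" for m
    using \<open>q \<le> g p\<close> pl_homeo_funpow[OF g] by (simp add: s_def t_def funpow_swap1)
  moreover have "s m \<le> 1" for m
  proof -
    have "(g ^^ m) p \<le> (g ^^ m) 1" using \<open>p < 1\<close> pl_homeo_funpow[OF g] by simp
    then show ?thesis using pl_homeo_outside[OF pl_homeo_funpow[OF g]] by (simp add: s_def)
  qed
  ultimately show False using bumps_not_accumulating[OF k] by blast
qed

lemma bump_commuting_fixes_ends: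
  assumes g: "pl_homeo g" and k: "pl_homeo k" and comm: "commute_on UNIV g k" and "bump k p q"
  shows "g p = p \<and> g q = q"
proof -
  have "surj g" using g unfolding pl_homeo_def by blast
  then have "commute_on UNIV (inv g) k"
    using commute_on_inv[OF g, of UNIV k] comm by (simp add: commute_on_sym)
  then have "\<not> p < inv g p" using bump_commuting_not_right[OF pl_homeo_inv[OF g] k] \<open>bump k p q\<close> by blast
  moreover have "\<not> p < g p" using bump_commuting_not_right[OF g k comm \<open>bump k p q\<close>] .
  ultimately have "g p = p" using g by (metis linorder_neqE pl_homeo_inv_f pl_homeo_inv pl_homeo_less_iff)
  moreover have "bump k p (g q)" using bump_commuting_image[OF g comm \<open>bump k p q\<close>] \<open>g p = p\<close> by simp
  ultimately show ?thesis
    using bump_overlap_eq[OF \<open>bump k p q\<close>, of p "g q" "(p + min q (g q)) / 2"] \<open>bump k p q\<close>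
    unfolding bump_def by auto
qed

lemma bump_of_commuting:
  assumes g: "pl_homeo g" and k: "pl_homeo k" and comm: "commute_on UNIV g k" and "bump k p q"
    and "e \<in> {p<..<q}" "g e \<noteq> e"
  shows "bump g p q"
proof -
  have ends: "g p = p \<and> g q = q" using bump_commuting_fixes_ends[OF assms(1-4)] .
  have "g y \<noteq> y" if "y \<in> {p<..<q}" for y
    using bump_commuting_id_if_fixed_point[OF k \<open>bump k p q\<close> g, of y] ends that assms(5,6)
      commute_on_subset[OF comm] by (auto simp: commute_on_sym)
  then show ?thesis using ends \<open>bump k p q\<close> unfolding bump_def by blast
qed

lemma pl_homeo_linear_near_fixed_point:
  assumes "pl_homeo f" "f p = p"
  obtains l e where "l > 0" "e > 0" "\<forall>x\<in>{p..p + e}. f x = p + l * (x - p)"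
proof -
  obtain e where "e > 0" "affine_on f p (p + e)" using pl_homeo_affine_near[OF assms(1)] by blast
  then obtain m k where mk: "\<forall>x\<in>{p..p + e}. f x = m * x + k" unfolding affine_on_def by blast
  have "m > 0" using affine_on_slope_pos[OF _ _ mk] assms(1) \<open>e > 0\<close> unfolding pl_homeo_def by simp
  moreover have "\<forall>x\<in>{p..p + e}. f x = p + m * (x - p)"
    using mk assms(2) \<open>e > 0\<close> by (simp add: algebra_simps)
  ultimately show ?thesis using that \<open>e > 0\<close> by blast
qed

lemma conj_agrees_near_fixed_point:
  assumes f: "pl_homeo f" and k: "pl_homeo k" and "f p = p" "k p = p"
  obtains e where "e > 0" "\<forall>x\<in>{p..p + e}. f (k (inv f x)) = k x"
proof -
  obtain l e0 where l: "l > 0" "e0 > 0" and f_lin: "\<forall>x\<in>{p..p + e0}. f x = p + l * (x - p)"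
    using pl_homeo_linear_near_fixed_point[OF f \<open>f p = p\<close>] by blast
  obtain l' e1 where l': "l' > 0" "e1 > 0" and k_lin: "\<forall>x\<in>{p..p + e1}. k x = p + l' * (x - p)"
    using pl_homeo_linear_near_fixed_point[OF k \<open>k p = p\<close>] by blast
  define e where "e = min (min (l * e0) (l * e1)) (min e1 (l * e0 / l'))"
  have "f (k (inv f x)) = k x" if x: "x \<in> {p..p + e}" for x
  proof -
    define y where "y = p + (x - p) / l"
    have "x - p \<le> l * e0" "x - p \<le> l * e1" "x - p \<le> l * e0 / l'" "x - p \<le> e1"
      using x by (auto simp: e_def)
    then have "(x - p) / l \<le> e0" "(x - p) / l \<le> e1" "l' * ((x - p) / l) \<le> e0"
      using l l' by (simp_all add: pos_divide_le_eq field_simps)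
    then have y: "y \<in> {p..p + e0}" "y \<in> {p..p + e1}" "p + l' * (y - p) \<in> {p..p + e0}"
      using x l l' by (auto simp: y_def)
    have "f y = x" using f_lin y(1) l by (simp add: y_def)
    then have "inv f x = y" using f by auto
    moreover have "f (k y) = p + l' * (x - p)"
      using f_lin k_lin y l by (simp add: y_def)
    moreover have "k x = p + l' * (x - p)" using k_lin x \<open>x - p \<le> e1\<close> by simp
    ultimately show ?thesis by simp
  qed
  moreover have "e > 0" using l l' by (simp add: e_def)
  ultimately show ?thesis using that by blast
qed

lemma bump_at_last_fixed_point:
  assumes g: "pl_homeo g" and "g a = a" "a \<le> w" "w < c" "g c = c" "\<forall>x\<in>{w<..<c}. g x \<noteq> x"
  obtains Q where "a \<le> Q" "Q \<le> w" "bump g Q c"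
proof -
  define S where "S = {a..w} \<inter> {x. g x = x}"
  have "closed S"
    unfolding S_def using closed_Collect_eq[OF pl_homeo_continuous_on[OF g] continuous_on_id]
    by (simp add: closed_Int)
  moreover have "a \<in> S" "bdd_above S" using assms(2,3) by (auto simp: S_def)
  ultimately have "Sup S \<in> S" using closed_contains_Sup by blast
  moreover have "g x \<noteq> x" if "x \<in> {Sup S<..<c}" for x
    using that assms(6) cSup_upper[OF _ \<open>bdd_above S\<close>, of x] \<open>a \<in> S\<close> \<open>Sup S \<in> S\<close>
    by (cases "x \<le> w") (auto simp: S_def)
  moreover have "a \<le> Sup S" "Sup S \<le> w" "g (Sup S) = Sup S" using \<open>Sup S \<in> S\<close> by (auto simp: S_def)
  ultimately have "bump g (Sup S) c" using assms(4,5) unfolding bump_def by auto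
  then show ?thesis using that \<open>a \<le> Sup S\<close> \<open>Sup S \<le> w\<close> by blast
qed

section \<open>Consequences of the commutator relations\<close>

lemma pcomm_eq_id_imp_commute_on:
  assumes "pl_homeo f" "pl_homeo h" "pcomm f h = id"
  shows "commute_on UNIV f h"
proof -
  have "inv h (inv f (h (f x))) = x" for x
    using assms(3) unfolding pcomm_def pmult_def pinv_def by (metis comp_apply id_apply)
  then have "h (f x) = f (h x)" for x using assms(1,2) by (metis pl_homeo_f_inv)
  then show ?thesis unfolding commute_on_def by simp
qed

lemma ordered_intervals_le:
  fixes b d :: "nat \<Rightarrow> real"
  assumes "\<forall>i\<in>{1..n}. b i < d i" "\<forall>i\<in>{1..<n}. d i \<le> b (Suc i)" "1 \<le> i" "i < j" "j \<le> n"
  shows "d i \<le> b j"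
  using \<open>i < j\<close> \<open>j \<le> n\<close>
proof (induction j rule: less_induct)
  case (less j)
  then obtain j' where j: "j = Suc j'" "i \<le> j'" by (metis less_eq_Suc_le Suc_le_D Suc_le_mono)
  show ?case
  proof (cases "i = j'")
    case False
    then have "d i \<le> b j'" using less j by simp
    also have "\<dots> < d j'" using assms(1,3) j less.prems by simp
    also have "\<dots> \<le> b j" using assms(2,3) j less.prems by auto
    finally show ?thesis by simp
  qed (use assms(2,3) j less.prems in auto)
qed

locale conjugates_commuting =
  fixes f0 f1 :: "real \<Rightarrow> real"
  assumes PL0_f0: "PL0 f0" and PL0_f1: "PL0 f1"
    and commutator_1: "pcomm (pconj f1 f0) (pmult f0 (pinv f1)) = id"
    and commutator_2: "pcomm (pmult f0 (pinv f1)) (pconj f1 (pmult f0 f0)) = id"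
begin

definition g :: "real \<Rightarrow> real" where "g = inv f1 \<circ> f0"
definition u :: "real \<Rightarrow> real" where "u = f0 \<circ> f1 \<circ> inv f0"
definition v :: "real \<Rightarrow> real" where "v = f0 \<circ> u \<circ> inv f0"

text \<open>As functions act on the right in the paper, these are \<open>g = f0 f1\<^sup>-\<^sup>1\<close>, \<open>u = f1\<^sup>f\<^sup>0\<close>
and \<open>v = f1\<^sup>f\<^sup>0\<^sup>2\<close> there.\<close>

lemma pl_homeo_f0: "pl_homeo f0" and pl_homeo_f1: "pl_homeo f1"
  using PL0_f0 PL0_f1 by (simp_all add: PL0_imp_pl_homeo)

lemmas f0_f1_simps [simp] =
  pl_homeo_less_iff[OF pl_homeo_f0] pl_homeo_le_iff[OF pl_homeo_f0] pl_homeo_eq_iff[OF pl_homeo_f0]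
  pl_homeo_inv_f[OF pl_homeo_f0] pl_homeo_f_inv[OF pl_homeo_f0]
  pl_homeo_less_iff[OF pl_homeo_f1] pl_homeo_le_iff[OF pl_homeo_f1] pl_homeo_eq_iff[OF pl_homeo_f1]
  pl_homeo_inv_f[OF pl_homeo_f1] pl_homeo_f_inv[OF pl_homeo_f1]

lemma pl_homeo_g: "pl_homeo g" and pl_homeo_u: "pl_homeo u" and pl_homeo_v: "pl_homeo v"
  unfolding g_def u_def v_def using pl_homeo_f0 pl_homeo_f1 by (simp_all add: pl_homeo_comp pl_homeo_inv)

lemma g_fixed_iff: "g x = x \<longleftrightarrow> f0 x = f1 x"
  unfolding g_def using pl_homeo_f1 by (metis comp_apply pl_homeo_f_inv pl_homeo_inv_f)

lemma commute_g_u: "commute_on UNIV g u"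
proof -
  have "pconj f1 f0 = u" "pmult f0 (pinv f1) = g"
    by (simp_all add: pconj_def pmult_def pinv_def u_def g_def comp_assoc)
  then show ?thesis using pcomm_eq_id_imp_commute_on[OF pl_homeo_u pl_homeo_g] commutator_1
    by (simp add: commute_on_sym)
qed

lemma commute_g_v: "commute_on UNIV g v"
proof -
  have "inv (f0 \<circ> f0) = inv f0 \<circ> inv f0" using pl_homeo_f0 by (simp add: o_inv_distrib pl_homeo_bij)
  then have "pconj f1 (pmult f0 f0) = v" "pmult f0 (pinv f1) = g"
    by (simp_all add: pconj_def pmult_def pinv_def v_def u_def g_def comp_assoc)
  then show ?thesis using pcomm_eq_id_imp_commute_on[OF pl_homeo_g pl_homeo_v] commutator_2 by simp
qed

lemma u_bump: "bump f1 p q \<Longrightarrow> bump u (f0 p) (f0 q)"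
  unfolding u_def by (rule bump_conj[OF pl_homeo_f0])

lemma v_bump: "bump f1 p q \<Longrightarrow> bump v (f0 (f0 p)) (f0 (f0 q))"
  unfolding v_def by (rule bump_conj[OF pl_homeo_f0 u_bump])

lemma f0_fixes_ends_of_f1_bump:
  assumes "bump f1 p q" "e \<in> {p<..<q}" "f0 e = e"
  shows "f0 p = p \<and> f0 q = q"
proof -
  have "g e \<noteq> e" using assms g_fixed_iff unfolding bump_def by (metis greaterThanLessThan_iff)
  have "e \<in> {f0 p<..<f0 q}" "e \<in> {f0 (f0 p)<..<f0 (f0 q)}"
    using assms(2,3) by (metis greaterThanLessThan_iff pl_homeo_less_iff[OF pl_homeo_f0])+
  then have "bump g (f0 p) (f0 q)" "bump g (f0 (f0 p)) (f0 (f0 q))"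
    using bump_of_commuting[OF pl_homeo_g pl_homeo_u commute_g_u u_bump[OF assms(1)]]
      bump_of_commuting[OF pl_homeo_g pl_homeo_v commute_g_v v_bump[OF assms(1)]] \<open>g e \<noteq> e\<close> by auto
  then have "f0 (f0 p) = f0 p \<and> f0 (f0 q) = f0 q"
    using bump_overlap_eq \<open>e \<in> {f0 p<..<f0 q}\<close> \<open>e \<in> {f0 (f0 p)<..<f0 (f0 q)}\<close> by metis
  then show ?thesis by simp
qed

lemma f0_id_on_f1_bump:
  assumes "bump f1 p q" "e \<in> {p<..<q}" "f0 e = e"
  shows "\<forall>x\<in>{p<..<q}. f0 x = x"
proof -
  have "f0 p = p" "f0 q = q" using f0_fixes_ends_of_f1_bump[OF assms] by auto
  then have u_pq: "bump u p q" using u_bump[OF assms(1)] by simp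
  have "g e \<noteq> e" using assms g_fixed_iff unfolding bump_def by (metis greaterThanLessThan_iff)
  then have g_pq: "bump g p q" using bump_of_commuting[OF pl_homeo_g pl_homeo_u commute_g_u u_pq assms(2)] by blast
  obtain \<delta> where "\<delta> > 0" "\<forall>x\<in>{p..p + \<delta>}. f0 (u (inv f0 x)) = u x"
    using conj_agrees_near_fixed_point[OF pl_homeo_f0 pl_homeo_u \<open>f0 p = p\<close>] u_pq unfolding bump_def by blast
  then have "\<forall>x\<in>{p<..<p + \<delta>}. v x = u x" by (simp add: v_def)
  moreover have "commute_on {p<..<q} v g" "commute_on {p<..<q} u g"
    using commute_on_subset[OF commute_g_v, of "{p<..<q}"] commute_on_subset[OF commute_g_u, of "{p<..<q}"]
    by (simp_all add: commute_on_sym)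
  ultimately have v_eq_u: "\<forall>x\<in>{p<..<q}. v x = u x"
    using bump_commuting_agree[OF pl_homeo_g g_pq _ _ \<open>\<delta> > 0\<close>] by blast
  have "commute_on {p<..<q} f0 u"
    unfolding commute_on_def
  proof
    fix x assume "x \<in> {p<..<q}"
    then have "f0 x \<in> {p<..<q}" using \<open>f0 p = p\<close> \<open>f0 q = q\<close> by (metis greaterThanLessThan_iff pl_homeo_less_iff[OF pl_homeo_f0])
    then have "v (f0 x) = u (f0 x)" using v_eq_u by blast
    then show "f0 (u x) = u (f0 x)" by (simp add: v_def)
  qed
  then show ?thesis
    using bump_commuting_id_if_fixed_point[OF pl_homeo_u u_pq pl_homeo_f0 \<open>f0 p = p\<close> _ assms(2,3)] by blast
qed

end

locale down_bump_setting = conjugates_commuting +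
  fixes a c :: real and n :: nat and b d :: "nat \<Rightarrow> real"
  assumes down_bump_ac: "down_bump f0 {a<..<c}"
    and not_orbital_ac: "\<not> orbital f1 {a<..<c}"
    and n_pos: "n \<ge> 1"
    and b_less_d: "\<forall>i\<in>{1..n}. b i < d i"
    and d_le_next_b: "\<forall>i\<in>{1..<n}. d i \<le> b (Suc i)"
    and orbitals_meeting_ac: "{B. orbital f1 B \<and> B \<inter> {a<..<c} \<noteq> {}} = (\<lambda>i. {b i<..<d i}) ` {1..n}"
begin

lemma one_mem: "1 \<in> {1..n}" and n_mem: "n \<in> {1..n}"
  using n_pos by auto

lemma bump_f0_ac: "bump f0 a c"
  using down_bump_ac bump_if_component unfolding down_bump_def orbital_def by blast

lemma f0_a: "f0 a = a" and f0_c: "f0 c = c" and a_less_c: "a < c"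
  using bump_f0_ac unfolding bump_def by auto

lemma f0_below: "x \<in> {a<..<c} \<Longrightarrow> a < f0 x \<and> f0 x < x"
  using down_bump_ac f0_a unfolding down_bump_def by (metis greaterThanLessThan_iff pl_homeo_less_iff[OF pl_homeo_f0])

lemma c_le_1: "c \<le> 1"
proof (rule ccontr)
  assume "\<not> c \<le> 1"
  then have "max a 1 < c" using a_less_c by simp
  then have "(max a 1 + c) / 2 \<in> {a<..<c}" "1 \<le> (max a 1 + c) / 2" by auto
  then show False using f0_below pl_homeo_outside[OF pl_homeo_f0] by fastforce
qed

lemma orbital_f1_meeting_ac: "i \<in> {1..n} \<Longrightarrow> orbital f1 {b i<..<d i} \<and> {b i<..<d i} \<inter> {a<..<c} \<noteq> {}"
proof -
  assume "i \<in> {1..n}"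
  then have "{b i<..<d i} \<in> (\<lambda>i. {b i<..<d i}) ` {1..n}" by blast
  then have "{b i<..<d i} \<in> {B. orbital f1 B \<and> B \<inter> {a<..<c} \<noteq> {}}" by (simp only: orbitals_meeting_ac)
  then show ?thesis by simp
qed

lemma f1_bump: "i \<in> {1..n} \<Longrightarrow> bump f1 (b i) (d i)"
  using orbital_f1_meeting_ac bump_if_component unfolding orbital_def by blast

lemma orbital_meets_ac: "i \<in> {1..n} \<Longrightarrow> b i < c \<and> a < d i"
  using orbital_f1_meeting_ac by fastforce

lemma in_orbital_if_moved:
  assumes "x \<in> {a<..<c}" "f1 x \<noteq> x"
  obtains i where "i \<in> {1..n}" "x \<in> {b i<..<d i}"
proof -
  have "x \<in> \<Union> (components (supp f1))" using assms(2) by (simp add: supp_def)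
  then obtain B where "B \<in> components (supp f1)" "x \<in> B" by blast
  then have "B \<in> {B. orbital f1 B \<and> B \<inter> {a<..<c} \<noteq> {}}" using assms(1) unfolding orbital_def by blast
  then show ?thesis using orbitals_meeting_ac that \<open>x \<in> B\<close> by blast
qed

lemma d_le_b: "1 \<le> i \<Longrightarrow> i < j \<Longrightarrow> j \<le> n \<Longrightarrow> d i \<le> b j"
  using ordered_intervals_le[OF b_less_d d_le_next_b] .

lemma b1_le: "i \<in> {1..n} \<Longrightarrow> b 1 \<le> b i"
  using d_le_b[of 1 i] b_less_d one_mem by (cases "i = 1") force+

lemma d_le_dn:
  assumes "i \<in> {1..n}" shows "d i \<le> d n"
proof (cases "i = n")
  case False
  then have "d i \<le> b n" using d_le_b[of i n] assms by simp
  also have "\<dots> < d n" using b_less_d n_mem by blast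
  finally show ?thesis by simp
qed simp

lemma g_fixes_u_bump_ends: "i \<in> {1..n} \<Longrightarrow> g (f0 (b i)) = f0 (b i) \<and> g (f0 (d i)) = f0 (d i)"
  using bump_commuting_fixes_ends[OF pl_homeo_g pl_homeo_u commute_g_u u_bump[OF f1_bump]] .

lemma g_fixes_v_bump_ends:
  "i \<in> {1..n} \<Longrightarrow> g (f0 (f0 (b i))) = f0 (f0 (b i)) \<and> g (f0 (f0 (d i))) = f0 (f0 (d i))"
  using bump_commuting_fixes_ends[OF pl_homeo_g pl_homeo_v commute_g_v v_bump[OF f1_bump]] .

lemma g_moves: "x \<in> {a<..<c} \<Longrightarrow> f1 x = x \<Longrightarrow> g x \<noteq> x"
  using f0_below g_fixed_iff by fastforce

lemma f0_moves_f1_orbitals: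
  assumes "i \<in> {1..n}" "e \<in> {b i<..<d i}" shows "f0 e \<noteq> e"
proof
  assume "f0 e = e"
  then have f0_id: "\<forall>x\<in>{b i<..<d i}. f0 x = x"
    using f0_id_on_f1_bump[OF f1_bump[OF assms(1)] assms(2)] by blast
  obtain z where "z \<in> {b i<..<d i}" "z \<in> {a<..<c}" using orbital_f1_meeting_ac[OF assms(1)] by blast
  then show False using f0_id f0_below[of z] by force
qed

lemma b1_eq_a: "b 1 = a"
proof (rule ccontr)
  assume "b 1 \<noteq> a"
  then consider "b 1 < a" | "a < b 1" by linarith
  then show False
  proof cases
    case 1
    then have "a \<in> {b 1<..<d 1}" using orbital_meets_ac[OF one_mem] by simp
    then show False using f0_moves_f1_orbitals[OF one_mem] f0_a by blast
  next
    case 2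
    define y where "y = f0 (b 1)"
    have "b 1 \<in> {a<..<c}" using 2 orbital_meets_ac[OF one_mem] by simp
    then have y: "y \<in> {a<..<c}" "y < b 1" using f0_below[of "b 1"] by (auto simp: y_def)
    have "f1 y = y"
    proof (rule ccontr)
      assume "f1 y \<noteq> y"
      then obtain i where "i \<in> {1..n}" "y \<in> {b i<..<d i}" using in_orbital_if_moved y(1) by blast
      then show False using b1_le y(2) by fastforce
    qed
    moreover have "g y = y" using g_fixes_u_bump_ends[OF one_mem] by (simp add: y_def)
    ultimately show False using g_moves y(1) by blast
  qed
qed

lemma b_mem: "2 \<le> i \<Longrightarrow> i \<le> n \<Longrightarrow> b i \<in> {a<..<c}"
  using d_le_b[of 1 i] b_less_d one_mem b1_eq_a orbital_meets_ac[of i] by force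

lemma dn_less_c: "d n < c"
proof (rule ccontr)
  assume "\<not> d n < c"
  then consider "c < d n" | "d n = c" "n = 1" | "d n = c" "n \<ge> 2" using n_pos by linarith
  then show False
  proof cases
    case 1
    then have "c \<in> {b n<..<d n}" using orbital_meets_ac[OF n_mem] by simp
    then show False using f0_moves_f1_orbitals[OF n_mem] f0_c by blast
  next
    case 2
    then have "orbital f1 {a<..<c}" using orbital_f1_meeting_ac[OF one_mem] b1_eq_a by simp
    then show False using not_orbital_ac by blast
  next
    case 3
    have bn: "b n \<in> {a<..<c}" using b_mem 3 by simp
    define y where "y = f0 (b n)"
    have y: "y \<in> {a<..<c}" "y < b n" using bn f0_below[of "b n"] by (auto simp: y_def)
    then have "f0 y < y" using f0_below by blast
    have "bump v (f0 y) c" using v_bump[OF f1_bump[OF n_mem]] 3 f0_c by (simp add: y_def)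
    moreover have "g (f0 y) = f0 y" "g y = y"
      using g_fixes_u_bump_ends[OF n_mem] g_fixes_v_bump_ends[OF n_mem] by (simp_all add: y_def)
    ultimately have "\<forall>x\<in>{f0 y<..<c}. g x = x"
      using bump_commuting_id_if_fixed_point[OF pl_homeo_v _ pl_homeo_g, of "f0 y" c y]
        commute_on_subset[OF commute_g_v] y bn \<open>f0 y < y\<close> by (auto simp: commute_on_sym)
    moreover have "b n \<in> {f0 y<..<c}" using y bn \<open>f0 y < y\<close> by simp
    moreover have "f1 (b n) = b n" using f1_bump[OF n_mem] unfolding bump_def by blast
    ultimately show False using g_moves bn by blast
  qed
qed

lemma d1_mem: "d 1 \<in> {a<..<c}"
  using orbital_meets_ac[OF one_mem] d_le_dn[OF one_mem] dn_less_c by simp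

lemma f0_eq_f1_below: "\<forall>x\<in>{a..f0 (d 1)}. f0 x = f1 x"
proof -
  let ?s = "f0 (d 1)"
  have s: "?s \<in> {a<..<c}" "?s < d 1" "f0 ?s \<in> {a<..<?s}"
    using f0_below d1_mem a_less_c by (fastforce simp: f0_below)+
  have "bump u a ?s" using u_bump[OF f1_bump[OF one_mem]] b1_eq_a f0_a by simp
  moreover have "g a = a" "g ?s = ?s" "g (f0 ?s) = f0 ?s"
    using g_fixes_u_bump_ends[OF one_mem] g_fixes_v_bump_ends[OF one_mem] b1_eq_a f0_a by auto
  moreover have "commute_on {a<..<?s} g u" using commute_on_subset[OF commute_g_u] by blast
  ultimately have "\<forall>x\<in>{a<..<?s}. g x = x"
    using bump_commuting_id_if_fixed_point[OF pl_homeo_u _ pl_homeo_g _ _ s(3)] by (simp add: commute_on_sym)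
  then have "\<forall>x\<in>{a..?s}. g x = x" using \<open>g a = a\<close> \<open>g ?s = ?s\<close> by (auto simp: le_less)
  then show ?thesis using g_fixed_iff by blast
qed

lemma f0_d_le_b:
  assumes "2 \<le> k" "k \<le> n" shows "f0 (d k) \<le> b k"
proof (rule ccontr)
  assume "\<not> f0 (d k) \<le> b k"
  have k: "k \<in> {1..n}" using assms by simp
  have bk: "b k \<in> {a<..<c}" using b_mem assms by blast
  have dk: "d k \<in> {a<..<c}" using orbital_meets_ac[OF k] d_le_dn[OF k] dn_less_c by simp
  have J: "bump u (f0 (b k)) (f0 (d k))" using u_bump[OF f1_bump[OF k]] .
  have inside: "f0 (f0 (d k)) \<in> {f0 (b k)<..<f0 (d k)}"
    using \<open>\<not> f0 (d k) \<le> b k\<close> f0_below[OF dk] by simp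
  have "commute_on {f0 (b k)<..<f0 (d k)} g u"
    using commute_on_subset[OF commute_g_u] by (simp add: commute_on_sym)
  then have "\<forall>x\<in>{f0 (b k)<..<f0 (d k)}. g x = x"
    using bump_commuting_id_if_fixed_point[OF pl_homeo_u J pl_homeo_g _ _ inside]
      g_fixes_u_bump_ends[OF k] g_fixes_v_bump_ends[OF k] by (simp add: commute_on_sym)
  moreover have "b k \<in> {f0 (b k)<..<f0 (d k)}" using \<open>\<not> f0 (d k) \<le> b k\<close> f0_below[OF bk] by simp
  moreover have "f1 (b k) = b k" using f1_bump[OF k] unfolding bump_def by blast
  ultimately show False using g_moves[OF bk] by blast
qed

lemma g_fixed_point_below_d1:
  assumes "a \<le> x" "x < c" "g x = x" shows "x < d 1"
proof (cases "x = a")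
  case False
  then have x: "x \<in> {a<..<c}" using assms by simp
  then have "f1 x \<noteq> x" using assms(3) g_moves by blast
  then obtain k where k: "k \<in> {1..n}" "x \<in> {b k<..<d k}" using in_orbital_if_moved x by blast
  show ?thesis
  proof (cases "k = 1")
    case False
    have "b k < f1 x" using k f1_bump[OF k(1)] unfolding bump_def by (metis greaterThanLessThan_iff pl_homeo_less_iff[OF pl_homeo_f1])
    also have "f1 x = f0 x" using assms(3) g_fixed_iff by simp
    also have "\<dots> < f0 (d k)" using k by simp
    also have "\<dots> \<le> b k" using f0_d_le_b[of k] False k(1) by simp
    finally show ?thesis by simp
  qed (use k in simp)
qed (use orbital_meets_ac[OF one_mem] in simp)

lemma f1_fixed_right: "x \<in> {d n..c} \<Longrightarrow> f1 x = x"
proof -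
  have "f1 x = x" if "x \<in> {d n<..<c}" for x
  proof (rule ccontr)
    assume "f1 x \<noteq> x"
    moreover have "x \<in> {a<..<c}" using that orbital_meets_ac[OF n_mem] by simp
    ultimately obtain i where "i \<in> {1..n}" "x \<in> {b i<..<d i}" using in_orbital_if_moved by blast
    then show False using d_le_dn that by fastforce
  qed
  then have "{d n<..<c} \<subseteq> {x. f1 x = x}" by blast
  moreover have "closed {x. f1 x = x}"
    using closed_Collect_eq[OF pl_homeo_continuous_on[OF pl_homeo_f1] continuous_on_id] by simp
  ultimately have "closure {d n<..<c} \<subseteq> {x. f1 x = x}" by (rule closure_minimal)
  then show "x \<in> {d n..c} \<Longrightarrow> f1 x = x" using dn_less_c by auto
qed

lemma g_bump_ending_at_c:
  obtains Q where "a \<le> Q" "bump g Q c"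
proof -
  define w where "w = inv f0 (d n)"
  have "d n \<in> {a<..<c}" using orbital_meets_ac[OF n_mem] dn_less_c by simp
  then have w: "a < w" "w < c" using f0_a f0_c unfolding w_def
    by (metis greaterThanLessThan_iff pl_homeo_less_iff[OF pl_homeo_f0] pl_homeo_f_inv[OF pl_homeo_f0])+
  have "g x \<noteq> x" if "x \<in> {w<..<c}" for x
  proof -
    have "f0 x \<in> {d n..c}" using that f0_c less_imp_le unfolding w_def
      by (metis atLeastAtMost_iff greaterThanLessThan_iff pl_homeo_le_iff[OF pl_homeo_f0] pl_homeo_f_inv[OF pl_homeo_f0])
    then have "g x = f0 x" using f1_fixed_right unfolding g_def by (metis comp_apply pl_homeo_inv_f[OF pl_homeo_f1])
    moreover have "x \<in> {a<..<c}" using that w by simp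
    ultimately show ?thesis using f0_below by fastforce
  qed
  moreover have "g a = a" "g c = c"
    using g_fixed_iff f0_a f0_c f1_fixed_right b1_eq_a f1_bump[OF one_mem] dn_less_c unfolding bump_def by auto
  ultimately show ?thesis using bump_at_last_fixed_point[OF pl_homeo_g] w that by (metis less_imp_le)
qed

lemma u_fixed_right: "x \<in> {f0 (d n)..c} \<Longrightarrow> u x = x"
  using f1_fixed_right[of "inv f0 x"] f0_c unfolding u_def
  by (metis atLeastAtMost_iff comp_apply pl_homeo_le_iff[OF pl_homeo_f0] pl_homeo_f_inv[OF pl_homeo_f0])

text \<open>The map \<open>u\<close> commutes with \<open>g\<close> and is the identity near \<open>c\<close>, hence on all of the last
bump \<open>(Q, c)\<close> of \<open>g\<close>; as \<open>u\<close> moves the points of \<open>(f0 (b n), f0 (d n))\<close>, \<open>f0 (d n) \<le> Q\<close>.\<close>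

lemma f0_dn_less_d1: "f0 (d n) < d 1"
proof -
  obtain Q where Q: "a \<le> Q" "bump g Q c" using g_bump_ending_at_c by blast
  have "u Q = Q"
    using bump_commuting_fixes_ends[OF pl_homeo_u pl_homeo_g _ Q(2)] commute_g_u by (simp add: commute_on_sym)
  have "f0 (d n) < c" using f0_below orbital_meets_ac[OF n_mem] dn_less_c by fastforce
  define y where "y = (max Q (f0 (d n)) + c) / 2"
  have "y \<in> {Q<..<c}" "u y = y" using Q \<open>f0 (d n) < c\<close> u_fixed_right unfolding y_def bump_def by auto
  moreover have "commute_on {Q<..<c} u g"
    using commute_on_subset[OF commute_g_u] by (simp add: commute_on_sym)
  ultimately have u_id: "\<forall>x\<in>{Q<..<c}. u x = x"
    using bump_commuting_id_if_fixed_point[OF pl_homeo_g Q(2) pl_homeo_u \<open>u Q = Q\<close>] by blast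
  have "f0 (d n) \<le> Q"
  proof (rule ccontr)
    assume "\<not> f0 (d n) \<le> Q"
    have J: "bump u (f0 (b n)) (f0 (d n))" using u_bump[OF f1_bump[OF n_mem]] .
    define x where "x = (max Q (f0 (b n)) + f0 (d n)) / 2"
    have "f0 (b n) < f0 (d n)" using J unfolding bump_def by blast
    then have "x \<in> {f0 (b n)<..<f0 (d n)}" "x \<in> {Q<..<c}"
      using \<open>\<not> f0 (d n) \<le> Q\<close> \<open>f0 (d n) < c\<close> unfolding x_def by (auto simp: max_def simp del: f0_f1_simps)
    then show False using J u_id unfolding bump_def by blast
  qed
  also have "Q < d 1" using g_fixed_point_below_d1 Q unfolding bump_def by simp
  finally show ?thesis .
qed

end

theorem lemma2p6:
  fixes f0 f1 :: "real \<Rightarrow> real" and a c :: real and n :: nat and b d :: "nat \<Rightarrow> real"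
  assumes "PL0 f0" and "PL0 f1"
    and "pcomm (pconj f1 f0) (pmult f0 (pinv f1)) = id"
    and "pcomm (pmult f0 (pinv f1)) (pconj f1 (pmult f0 f0)) = id"
    and "down_bump f0 {a<..<c}"
    and "\<not> orbital f1 {a<..<c}"
    and "n \<ge> 1"
    and "\<forall>i\<in>{1..n}. b i < d i"
    and "\<forall>i\<in>{1..<n}. d i \<le> b (Suc i)"
    and "{B. orbital f1 B \<and> B \<inter> {a<..<c} \<noteq> {}} = (\<lambda>i. {b i<..<d i}) ` {1..n}"
  shows "d n < c \<and>
    (\<exists>\<rho>>a. \<forall>x\<in>{a..\<rho>}. f0 x = f1 x) \<and>
    b 1 = a \<and>
    (\<forall>\<rho>. (\<rho> \<in> {a..1} \<and> (\<forall>x\<in>{a..\<rho>}. f0 x = f1 x) \<and>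
              (\<forall>\<sigma>\<in>{a..1}. (\<forall>x\<in>{a..\<sigma>}. f0 x = f1 x) \<longrightarrow> \<sigma> \<le> \<rho>))
            \<longrightarrow> f0 (d 1) \<le> \<rho>) \<and>
    f0 (d n) < d 1"
proof -
  interpret down_bump_setting f0 f1 a c n b d
    using assms by unfold_locales
  have "f0 (d 1) \<in> {a<..<c}" using f0_below[OF d1_mem] d1_mem by auto
  then have "f0 (d 1) \<in> {a..1}" "a < f0 (d 1)" using c_le_1 by auto
  then show ?thesis using dn_less_c b1_eq_a f0_eq_f1_below f0_dn_less_d1 by blast
qed

end
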